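(* Let $\phi$ be a circuit all of whose constraints $F_v$ are even-windable. Then the signature $[\![\phi]\!]$ is even-windable.
   Context: For $x,y\in\{0,1\}^J$, $x\oplus y$ is coordinatewise addition mod 2, and $\mathbf S$ is the characteristic vector of $S\subseteq J$. For $z\in\{0,1\}^J$, $\mathrm{Match}(z)$ is the set of partitions of $\{i:z_i=1\}$ into pairs. $F:\{0,1\}^J\to\mathbb{Q}_{\ge0}$ is even-windable if there exist $B(x,y,M)\ge0$ for all $x,y\in\{0,1\}^J$, $M\in\mathrm{Match}(x\oplus y)$, with (EW1) $F(x)F(y)=\sum_{M\in\mathrm{Match}(x\oplus y)}B(x,y,M)$ for all $x,y$, and (EW2) $B(x,y,M)=B(x\oplus\mathbf S,y\oplus\mathbf S,M)$ for all $x,y$ and all $S\in M\in\mathrm{Match}(x\oplus y)$. A circuit $\phi$ consists of: a finite set $J$ of incidences; a finite set $V$ of vertices with sets $J_v$ partitioning $J$; a set $A\subseteq J$ of external edges; a partition $E$ of $J\setminus A$ into pairs (internal edges); and constraints $F_v:\{0,1\}^{J_v}\to\mathbb{Q}_{\ge0}$. An assignment is $x\in\{0,1\}^J$ with $x_i=x_j$ for all $\{i,j\}\in E$; $\mathrm{wt}_\phi(x)=\prod_vF_v(x|_{J_v})$; the signature is $[\![\phi]\!]:\{0,1\}^A\to\mathbb{Q}_{\ge0}$, $[\![\phi]\!](x)=\sum\mathrm{wt}_\phi(x')$ over assignments $x'$ extending $x$. *)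

theory Defs
  imports Complex_Main
begin

text \<open>Elements of {0,1}^J are represented by subsets of J (the support);
  coordinatewise addition mod 2 is symmetric difference, and the
  characteristic vector of S is S itself.\<close>

definition xorset :: "'j set \<Rightarrow> 'j set \<Rightarrow> 'j set" (infixl "\<oplus>\<^sub>s" 65) where
  "x \<oplus>\<^sub>s y = (x - y) \<union> (y - x)"

definition Match :: "'j set \<Rightarrow> 'j set set set" where
  "Match z = {M. (\<forall>S\<in>M. card S = 2) \<and> \<Union>M = z \<and>
                 (\<forall>S\<in>M. \<forall>T\<in>M. S \<noteq> T \<longrightarrow> S \<inter> T = {})}"

definition even_windable :: "'j set \<Rightarrow> ('j set \<Rightarrow> rat) \<Rightarrow> bool" where
  "even_windable J F \<longleftrightarrow>
    (\<exists>B :: 'j set \<Rightarrow> 'j set \<Rightarrow> 'j set set \<Rightarrow> rat.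
       (\<forall>x y M. x \<subseteq> J \<longrightarrow> y \<subseteq> J \<longrightarrow> M \<in> Match (x \<oplus>\<^sub>s y) \<longrightarrow> B x y M \<ge> 0) \<and>
       (\<forall>x y. x \<subseteq> J \<longrightarrow> y \<subseteq> J \<longrightarrow>
          F x * F y = (\<Sum>M\<in>Match (x \<oplus>\<^sub>s y). B x y M)) \<and>
       (\<forall>x y M S. x \<subseteq> J \<longrightarrow> y \<subseteq> J \<longrightarrow> M \<in> Match (x \<oplus>\<^sub>s y) \<longrightarrow> S \<in> M \<longrightarrow>
          B x y M = B (x \<oplus>\<^sub>s S) (y \<oplus>\<^sub>s S) M))"

text \<open>A circuit: incidences J, vertices V with incidence sets Jv v partitioning J,
  external edges A \<subseteq> J, internal edges E a partition of J - A into pairs,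
  and nonnegative constraints F v on {0,1}^(Jv v).\<close>
definition circuit ::
  "'j set \<Rightarrow> 'v set \<Rightarrow> ('v \<Rightarrow> 'j set) \<Rightarrow> 'j set \<Rightarrow> 'j set set \<Rightarrow> ('v \<Rightarrow> 'j set \<Rightarrow> rat) \<Rightarrow> bool" where
  "circuit J V Jv A E F \<longleftrightarrow>
     finite J \<and> finite V \<and>
     (\<forall>v\<in>V. Jv v \<subseteq> J) \<and> (\<Union>v\<in>V. Jv v) = J \<and>
     (\<forall>v\<in>V. \<forall>w\<in>V. v \<noteq> w \<longrightarrow> Jv v \<inter> Jv w = {}) \<and>
     A \<subseteq> J \<and> E \<in> Match (J - A) \<and>
     (\<forall>v\<in>V. \<forall>x. x \<subseteq> Jv v \<longrightarrow> F v x \<ge> 0)"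

definition assignments :: "'j set \<Rightarrow> 'j set set \<Rightarrow> 'j set set" where
  "assignments J E = {x. x \<subseteq> J \<and> (\<forall>i j. {i, j} \<in> E \<longrightarrow> (i \<in> x \<longleftrightarrow> j \<in> x))}"

definition wt :: "'v set \<Rightarrow> ('v \<Rightarrow> 'j set) \<Rightarrow> ('v \<Rightarrow> 'j set \<Rightarrow> rat) \<Rightarrow> 'j set \<Rightarrow> rat" where
  "wt V Jv F x = (\<Prod>v\<in>V. F v (x \<inter> Jv v))"

definition signature ::
  "'j set \<Rightarrow> 'v set \<Rightarrow> ('v \<Rightarrow> 'j set) \<Rightarrow> 'j set \<Rightarrow> 'j set set \<Rightarrow> ('v \<Rightarrow> 'j set \<Rightarrow> rat) \<Rightarrow> 'j set \<Rightarrow> rat" where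
  "signature J V Jv A E F x = (\<Sum>x'\<in>{x' \<in> assignments J E. x' \<inter> A = x}. wt V Jv F x')"

end

theory Submission
  imports Defs
begin

text \<open>Even-windability is preserved by two operations, and the signature of a circuit is
  obtained from its constraints by exactly these. The first is the tensor product of functions
  on disjoint incidence sets: a matching that respects the splitting is a pair of matchings,
  and the windings multiply. The second is the contraction of a pair e = {i, j}, mapping F to
  x \<mapsto> F x + F (x \<union> e). A winding of the contraction is obtained by filling in the values on e
  in all four ways and splicing each matching through e: the pairs {i, p} and {j, q} meeting e
  are joined into {p, q}. Winding along a spliced pair {p, q} is winding along {i, p} and
  {j, q} in the original, which also toggles both values on e, so it permutes the four
  fillings. Tensoring all constraints gives the weight function on J; contracting every
  internal edge then gives the signature.\<close>

lemma MatchI: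
  assumes "\<And>S. S \<in> M \<Longrightarrow> card S = 2" "\<Union>M = Z"
    and "\<And>S T. S \<in> M \<Longrightarrow> T \<in> M \<Longrightarrow> S \<noteq> T \<Longrightarrow> S \<inter> T = {}"
  shows "M \<in> Match Z"
  using assms unfolding Match_def by blast

lemma Match_card: "M \<in> Match Z \<Longrightarrow> S \<in> M \<Longrightarrow> card S = 2"
  unfolding Match_def by blast

lemma Union_Match: "M \<in> Match Z \<Longrightarrow> \<Union>M = Z"
  unfolding Match_def by blast

lemma Match_disjoint: "M \<in> Match Z \<Longrightarrow> S \<in> M \<Longrightarrow> T \<in> M \<Longrightarrow> S \<noteq> T \<Longrightarrow> S \<inter> T = {}"
  unfolding Match_def by blast

lemma Match_empty: "Match {} = {{}}"
  by (auto simp: Match_def) (metis card.empty zero_neq_numeral)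

lemma Match_singleton: "card T = 2 \<Longrightarrow> {T} \<in> Match T"
  by (rule MatchI) auto

lemma Match_Un:
  assumes "M1 \<in> Match Z1" "M2 \<in> Match Z2" "Z1 \<inter> Z2 = {}"
  shows "M1 \<union> M2 \<in> Match (Z1 \<union> Z2)"
proof (rule MatchI)
  fix S T assume "S \<in> M1 \<union> M2" "T \<in> M1 \<union> M2" "S \<noteq> T"
  then show "S \<inter> T = {}"
    using Match_disjoint[OF assms(1)] Match_disjoint[OF assms(2)] Union_Match[OF assms(1)]
      Union_Match[OF assms(2)] assms(3) by blast
next
  show "\<Union>(M1 \<union> M2) = Z1 \<union> Z2"
    using Union_Match[OF assms(1)] Union_Match[OF assms(2)] by blast
qed (use Match_card[OF assms(1)] Match_card[OF assms(2)] in blast)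

lemma Match_Diff:
  assumes "M \<in> Match Z" "Q \<subseteq> M"
  shows "M - Q \<in> Match (Z - \<Union>Q)"
proof (rule MatchI)
  show "\<Union>(M - Q) = Z - \<Union>Q"
    using Union_Match[OF assms(1)] Match_disjoint[OF assms(1)] assms(2) by blast
qed (use Match_card[OF assms(1)] Match_disjoint[OF assms(1)] in auto)

lemma Match_restrict:
  assumes "M \<in> Match Z" "\<forall>T\<in>M. T \<subseteq> K \<or> T \<inter> K = {}"
  shows "{T\<in>M. T \<subseteq> K} \<in> Match (Z \<inter> K)"
proof (rule MatchI)
  show "\<Union>{T\<in>M. T \<subseteq> K} = Z \<inter> K"
    using Union_Match[OF assms(1)] assms(2) by blast
qed (use Match_card[OF assms(1)] Match_disjoint[OF assms(1)] in auto)

lemma finite_Match: "finite Z \<Longrightarrow> finite (Match Z)"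
  by (rule finite_subset[of _ "Pow (Pow Z)"]) (auto simp: Match_def)

lemma xorset_Un_disjoint:
  "(x \<union> y) \<inter> (c \<union> d) = {} \<Longrightarrow> (x \<union> c) \<oplus>\<^sub>s (y \<union> d) = (x \<oplus>\<^sub>s y) \<union> (c \<oplus>\<^sub>s d)"
  by (auto simp: xorset_def)

lemma xorset_cancel: "(x \<oplus>\<^sub>s S) \<oplus>\<^sub>s (y \<oplus>\<^sub>s S) = x \<oplus>\<^sub>s y"
  by (auto simp: xorset_def)

definition winding ::
  "'j set \<Rightarrow> ('j set \<Rightarrow> rat) \<Rightarrow> ('j set \<Rightarrow> 'j set \<Rightarrow> 'j set set \<Rightarrow> rat) \<Rightarrow> bool" where
  "winding J F B \<longleftrightarrow>
    (\<forall>x y M. x \<subseteq> J \<longrightarrow> y \<subseteq> J \<longrightarrow> M \<in> Match (x \<oplus>\<^sub>s y) \<longrightarrow> B x y M \<ge> 0) \<and>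
    (\<forall>x y. x \<subseteq> J \<longrightarrow> y \<subseteq> J \<longrightarrow> F x * F y = (\<Sum>M\<in>Match (x \<oplus>\<^sub>s y). B x y M)) \<and>
    (\<forall>x y M S. x \<subseteq> J \<longrightarrow> y \<subseteq> J \<longrightarrow> M \<in> Match (x \<oplus>\<^sub>s y) \<longrightarrow> S \<in> M \<longrightarrow>
       B x y M = B (x \<oplus>\<^sub>s S) (y \<oplus>\<^sub>s S) M)"

lemma even_windable_iff_winding: "even_windable J F \<longleftrightarrow> (\<exists>B. winding J F B)"
  unfolding even_windable_def winding_def ..

lemma windingI:
  assumes "\<And>x y M. x \<subseteq> J \<Longrightarrow> y \<subseteq> J \<Longrightarrow> M \<in> Match (x \<oplus>\<^sub>s y) \<Longrightarrow> B x y M \<ge> 0"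
    and "\<And>x y. x \<subseteq> J \<Longrightarrow> y \<subseteq> J \<Longrightarrow> F x * F y = (\<Sum>M\<in>Match (x \<oplus>\<^sub>s y). B x y M)"
    and "\<And>x y M S. x \<subseteq> J \<Longrightarrow> y \<subseteq> J \<Longrightarrow> M \<in> Match (x \<oplus>\<^sub>s y) \<Longrightarrow> S \<in> M \<Longrightarrow>
           B x y M = B (x \<oplus>\<^sub>s S) (y \<oplus>\<^sub>s S) M"
  shows "winding J F B"
  unfolding winding_def using assms by (intro conjI allI impI)

context
  fixes J F B
  assumes B: "winding J F B"
begin

lemma winding_nonneg: "x \<subseteq> J \<Longrightarrow> y \<subseteq> J \<Longrightarrow> M \<in> Match (x \<oplus>\<^sub>s y) \<Longrightarrow> B x y M \<ge> 0"
  using B unfolding winding_def by simp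

lemma winding_product: "x \<subseteq> J \<Longrightarrow> y \<subseteq> J \<Longrightarrow> F x * F y = (\<Sum>M\<in>Match (x \<oplus>\<^sub>s y). B x y M)"
  using B unfolding winding_def by simp

lemma winding_flip:
  "x \<subseteq> J \<Longrightarrow> y \<subseteq> J \<Longrightarrow> M \<in> Match (x \<oplus>\<^sub>s y) \<Longrightarrow> S \<in> M \<Longrightarrow> B x y M = B (x \<oplus>\<^sub>s S) (y \<oplus>\<^sub>s S) M"
  using B[unfolded winding_def, THEN conjunct2, THEN conjunct2] by meson

end

lemma even_windable_cong:
  assumes "even_windable J F" "\<And>x. x \<subseteq> J \<Longrightarrow> F x = G x"
  shows "even_windable J G"
proof -
  obtain B where B: "winding J F B"
    using assms(1) even_windable_iff_winding by blast
  have "winding J G B"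
  proof (rule windingI)
    show "G x * G y = (\<Sum>M\<in>Match (x \<oplus>\<^sub>s y). B x y M)" if "x \<subseteq> J" "y \<subseteq> J" for x y
      using winding_product[OF B that] assms(2) that by simp
  qed (fact winding_nonneg[OF B] winding_flip[OF B])+
  then show ?thesis
    using even_windable_iff_winding by blast
qed

lemma even_windable_empty: "even_windable {} (\<lambda>x. 1)"
  unfolding even_windable_iff_winding
  by (rule exI[of _ "\<lambda>x y M. 1"], rule windingI) (auto simp: Match_empty xorset_def)

lemma Match_restrict_xorset:
  assumes "M \<in> Match (x \<oplus>\<^sub>s y)" "\<forall>T\<in>M. T \<subseteq> K \<or> T \<inter> K = {}"
  shows "{T\<in>M. T \<subseteq> K} \<in> Match ((x \<inter> K) \<oplus>\<^sub>s (y \<inter> K))"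
proof -
  have "(x \<inter> K) \<oplus>\<^sub>s (y \<inter> K) = (x \<oplus>\<^sub>s y) \<inter> K"
    by (auto simp: xorset_def)
  then show ?thesis
    using Match_restrict[OF assms] by simp
qed

context
  fixes K F B
  assumes B: "winding K F B"
begin

lemma winding_restrict_nonneg:
  assumes "M \<in> Match (x \<oplus>\<^sub>s y)" "\<forall>T\<in>M. T \<subseteq> K \<or> T \<inter> K = {}"
  shows "B (x \<inter> K) (y \<inter> K) {T\<in>M. T \<subseteq> K} \<ge> 0"
  by (rule winding_nonneg[OF B Int_lower2 Int_lower2 Match_restrict_xorset[OF assms]])

lemma winding_restrict_flip:
  assumes "M \<in> Match (x \<oplus>\<^sub>s y)" "\<forall>T\<in>M. T \<subseteq> K \<or> T \<inter> K = {}" "S \<in> M"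
  shows "B ((x \<oplus>\<^sub>s S) \<inter> K) ((y \<oplus>\<^sub>s S) \<inter> K) {T\<in>M. T \<subseteq> K} = B (x \<inter> K) (y \<inter> K) {T\<in>M. T \<subseteq> K}"
proof (cases "S \<subseteq> K")
  case True
  then have "(x \<oplus>\<^sub>s S) \<inter> K = (x \<inter> K) \<oplus>\<^sub>s S" "(y \<oplus>\<^sub>s S) \<inter> K = (y \<inter> K) \<oplus>\<^sub>s S"
    by (auto simp: xorset_def)
  moreover have "S \<in> {T\<in>M. T \<subseteq> K}"
    using True assms(3) by blast
  then have "B (x \<inter> K) (y \<inter> K) {T\<in>M. T \<subseteq> K} =
      B ((x \<inter> K) \<oplus>\<^sub>s S) ((y \<inter> K) \<oplus>\<^sub>s S) {T\<in>M. T \<subseteq> K}"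
    by (rule winding_flip[OF B Int_lower2 Int_lower2 Match_restrict_xorset[OF assms(1,2)]])
  ultimately show ?thesis
    by simp
next
  case False
  then have "S \<inter> K = {}"
    using assms(2,3) by blast
  then have "(x \<oplus>\<^sub>s S) \<inter> K = x \<inter> K" "(y \<oplus>\<^sub>s S) \<inter> K = y \<inter> K"
    by (auto simp: xorset_def)
  then show ?thesis
    by simp
qed

end

lemma bij_betw_Match_split:
  assumes disj: "J1 \<inter> J2 = {}" and Z: "Z \<subseteq> J1 \<union> J2"
  shows "bij_betw (\<lambda>M. ({T\<in>M. T \<subseteq> J1}, {T\<in>M. T \<subseteq> J2}))
           {M \<in> Match Z. \<forall>T\<in>M. T \<subseteq> J1 \<or> T \<subseteq> J2} (Match (Z \<inter> J1) \<times> Match (Z \<inter> J2))"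
proof (rule bij_betw_byWitness[where f' = "\<lambda>(M1, M2). M1 \<union> M2"])
  have respects: "\<forall>T\<in>M. T \<subseteq> K \<or> T \<inter> K = {}"
    if "\<forall>T\<in>M. T \<subseteq> J1 \<or> T \<subseteq> J2" "K \<in> {J1, J2}" for M :: "'a set set" and K
    using that disj by blast
  show "(\<lambda>M. ({T\<in>M. T \<subseteq> J1}, {T\<in>M. T \<subseteq> J2})) ` {M \<in> Match Z. \<forall>T\<in>M. T \<subseteq> J1 \<or> T \<subseteq> J2}
      \<subseteq> Match (Z \<inter> J1) \<times> Match (Z \<inter> J2)"
  proof (rule image_subsetI)
    fix M assume "M \<in> {M \<in> Match Z. \<forall>T\<in>M. T \<subseteq> J1 \<or> T \<subseteq> J2}"
    then show "({T\<in>M. T \<subseteq> J1}, {T\<in>M. T \<subseteq> J2}) \<in> Match (Z \<inter> J1) \<times> Match (Z \<inter> J2)"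
      using Match_restrict[OF _ respects] by simp
  qed
  have Z_split: "Z \<inter> J1 \<union> Z \<inter> J2 = Z" "(Z \<inter> J1) \<inter> (Z \<inter> J2) = {}"
    using Z disj by blast+
  show "(\<lambda>(M1, M2). M1 \<union> M2) ` (Match (Z \<inter> J1) \<times> Match (Z \<inter> J2))
      \<subseteq> {M \<in> Match Z. \<forall>T\<in>M. T \<subseteq> J1 \<or> T \<subseteq> J2}"
  proof (rule image_subsetI)
    fix p assume "p \<in> Match (Z \<inter> J1) \<times> Match (Z \<inter> J2)"
    then obtain M1 M2 where p: "p = (M1, M2)" and M: "M1 \<in> Match (Z \<inter> J1)" "M2 \<in> Match (Z \<inter> J2)"
      by blast
    have "M1 \<union> M2 \<in> Match Z"
      using Match_Un[OF M Z_split(2)] Z_split(1) by simp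
    moreover have "\<forall>T\<in>M1 \<union> M2. T \<subseteq> J1 \<or> T \<subseteq> J2"
      using Union_Match[OF M(1)] Union_Match[OF M(2)] by blast
    ultimately show "(\<lambda>(M1, M2). M1 \<union> M2) p \<in> {M \<in> Match Z. \<forall>T\<in>M. T \<subseteq> J1 \<or> T \<subseteq> J2}"
      using p by simp
  qed
  have "{T \<in> M1 \<union> M2. T \<subseteq> J1} = M1" "{T \<in> M1 \<union> M2. T \<subseteq> J2} = M2"
    if "M1 \<in> Match (Z \<inter> J1)" "M2 \<in> Match (Z \<inter> J2)" for M1 M2
  proof -
    have "T \<noteq> {}" if "T \<in> M1 \<union> M2" for T
      using that Match_card \<open>M1 \<in> _\<close> \<open>M2 \<in> _\<close> by fastforce
    moreover have "\<forall>T\<in>M1. T \<subseteq> J1" "\<forall>T\<in>M2. T \<subseteq> J2"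
      using Union_Match that by blast+
    ultimately show "{T \<in> M1 \<union> M2. T \<subseteq> J1} = M1" "{T \<in> M1 \<union> M2. T \<subseteq> J2} = M2"
      using disj by blast+
  qed
  then show "\<forall>p\<in>Match (Z \<inter> J1) \<times> Match (Z \<inter> J2).
      (\<lambda>M. ({T\<in>M. T \<subseteq> J1}, {T\<in>M. T \<subseteq> J2})) ((\<lambda>(M1, M2). M1 \<union> M2) p) = p"
    by auto
qed auto

lemma even_windable_tensor:
  fixes J1 J2 :: "'j set"
  assumes ew1: "even_windable J1 F1" and ew2: "even_windable J2 F2"
    and disj: "J1 \<inter> J2 = {}" and fin: "finite J1" "finite J2"
  shows "even_windable (J1 \<union> J2) (\<lambda>x. F1 (x \<inter> J1) * F2 (x \<inter> J2))"
proof -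
  obtain B1 B2 where B1: "winding J1 F1 B1" and B2: "winding J2 F2 B2"
    using ew1 ew2 even_windable_iff_winding by blast
  define split where "split M \<longleftrightarrow> (\<forall>T\<in>M. T \<subseteq> J1 \<or> T \<subseteq> J2)" for M
  define B where "B x y M = (if split M
      then B1 (x \<inter> J1) (y \<inter> J1) {T\<in>M. T \<subseteq> J1} * B2 (x \<inter> J2) (y \<inter> J2) {T\<in>M. T \<subseteq> J2}
      else 0)" for x y M
  have respects: "\<forall>T\<in>M. T \<subseteq> J1 \<or> T \<inter> J1 = {}" "\<forall>T\<in>M. T \<subseteq> J2 \<or> T \<inter> J2 = {}"
    if "split M" for M
    using that disj unfolding split_def by blast+
  have "winding (J1 \<union> J2) (\<lambda>x. F1 (x \<inter> J1) * F2 (x \<inter> J2)) B"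
  proof (rule windingI)
    fix x y :: "'j set" and M assume "M \<in> Match (x \<oplus>\<^sub>s y)"
    then show "0 \<le> B x y M"
      unfolding B_def
      using winding_restrict_nonneg[OF B1] winding_restrict_nonneg[OF B2] respects by simp
  next
    fix x y :: "'j set" and M S assume "M \<in> Match (x \<oplus>\<^sub>s y)" "S \<in> M"
    then show "B x y M = B (x \<oplus>\<^sub>s S) (y \<oplus>\<^sub>s S) M"
      unfolding B_def
      using winding_restrict_flip[OF B1] winding_restrict_flip[OF B2] respects by simp
  next
    fix x y assume x: "x \<subseteq> J1 \<union> J2" and y: "y \<subseteq> J1 \<union> J2"
    define Z where "Z = x \<oplus>\<^sub>s y"
    have Z: "Z \<subseteq> J1 \<union> J2" "finite Z"
      unfolding Z_def using x y fin by (auto simp: xorset_def intro: finite_subset)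
    have restrict: "(x \<inter> K) \<oplus>\<^sub>s (y \<inter> K) = Z \<inter> K" for K
      unfolding Z_def by (auto simp: xorset_def)
    have "F1 (x \<inter> J1) * F2 (x \<inter> J2) * (F1 (y \<inter> J1) * F2 (y \<inter> J2))
        = (F1 (x \<inter> J1) * F1 (y \<inter> J1)) * (F2 (x \<inter> J2) * F2 (y \<inter> J2))"
      by (simp add: algebra_simps)
    also have "\<dots> = (\<Sum>M1\<in>Match (Z \<inter> J1). B1 (x \<inter> J1) (y \<inter> J1) M1)
                  * (\<Sum>M2\<in>Match (Z \<inter> J2). B2 (x \<inter> J2) (y \<inter> J2) M2)"
      using winding_product[OF B1, of "x \<inter> J1" "y \<inter> J1"] winding_product[OF B2, of "x \<inter> J2" "y \<inter> J2"]
      by (simp add: restrict)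
    also have "\<dots> = (\<Sum>(M1, M2)\<in>Match (Z \<inter> J1) \<times> Match (Z \<inter> J2).
                      B1 (x \<inter> J1) (y \<inter> J1) M1 * B2 (x \<inter> J2) (y \<inter> J2) M2)"
      by (simp add: sum_product sum.cartesian_product)
    also have "\<dots> = (\<Sum>M\<in>{M \<in> Match Z. split M}. B x y M)"
      unfolding sum.reindex_bij_betw[OF bij_betw_Match_split[OF disj Z(1)], symmetric]
      by (rule sum.cong) (simp_all add: B_def split_def)
    also have "\<dots> = (\<Sum>M\<in>Match Z. B x y M)"
      by (rule sum.mono_neutral_left) (auto simp: B_def finite_Match Z(2))
    finally show "F1 (x \<inter> J1) * F2 (x \<inter> J2) * (F1 (y \<inter> J1) * F2 (y \<inter> J2))
        = (\<Sum>M\<in>Match (x \<oplus>\<^sub>s y). B x y M)"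
      unfolding Z_def .
  qed
  then show ?thesis
    using even_windable_iff_winding by blast
qed

lemma even_windable_prod:
  assumes "finite V"
    and "\<forall>v\<in>V. \<forall>w\<in>V. v \<noteq> w \<longrightarrow> Jv v \<inter> Jv w = {}"
    and "\<forall>v\<in>V. finite (Jv v)"
    and "\<forall>v\<in>V. even_windable (Jv v) (F v)"
  shows "even_windable (\<Union>v\<in>V. Jv v) (\<lambda>x. \<Prod>v\<in>V. F v (x \<inter> Jv v))"
  using assms
proof (induction V rule: finite_induct)
  case empty
  show ?case
    using even_windable_empty by simp
next
  case (insert v V)
  let ?JV = "\<Union>w\<in>V. Jv w"
  have "Jv v \<inter> ?JV = {}"
  proof -
    have "Jv v \<inter> Jv w = {}" if "w \<in> V" for w
      using that insert.hyps(2) insert.prems(1) by fastforce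
    then show ?thesis
      by blast
  qed
  moreover have "finite ?JV"
    using insert.hyps(1) insert.prems(2) by simp
  ultimately have "even_windable (Jv v \<union> ?JV) (\<lambda>x. F v (x \<inter> Jv v) * (\<Prod>w\<in>V. F w (x \<inter> ?JV \<inter> Jv w)))"
    using even_windable_tensor[OF _ insert.IH] insert.prems by simp
  moreover have "x \<inter> ?JV \<inter> Jv w = x \<inter> Jv w" if "w \<in> V" for x w
    using that by blast
  ultimately show ?case
    using insert.hyps by simp
qed

text \<open>If M matches a set containing the pair e, or disjoint from it, then \<open>splice e M\<close>
  matches the set without e; \<open>through e M\<close> is the joined pair, empty if e \<in> M.\<close>

definition through :: "'j set \<Rightarrow> 'j set set \<Rightarrow> 'j set" where
  "through e M = \<Union>{S\<in>M. S \<inter> e \<noteq> {}} - e"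

definition splice :: "'j set \<Rightarrow> 'j set set \<Rightarrow> 'j set set" where
  "splice e M = {S\<in>M. S \<inter> e = {}} \<union> (if through e M = {} then {} else {through e M})"

lemma through_pairs:
  assumes M: "M \<in> Match W" and e: "card e = 2" "e \<subseteq> W \<or> e \<inter> W = {}"
    and nonempty: "through e M \<noteq> {}"
  shows "\<exists>P1 P2. P1 \<in> M \<and> P2 \<in> M \<and> P1 \<inter> P2 = {} \<and> P1 \<union> P2 = through e M \<union> e
           \<and> card (through e M) = 2"
proof -
  have "e \<subseteq> W"
  proof (rule ccontr)
    assume "\<not> e \<subseteq> W"
    then have "\<forall>S\<in>M. S \<inter> e = {}"
      using e(2) Union_Match[OF M] by blast
    then show False
      using nonempty unfolding through_def by blast
  qed
  obtain i j where ij: "e = {i, j}" "i \<noteq> j"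
    using e(1)[unfolded card_2_iff] by blast
  then obtain Pi Pj where Pi: "Pi \<in> M" "i \<in> Pi" and Pj: "Pj \<in> M" "j \<in> Pj"
    using \<open>e \<subseteq> W\<close> Union_Match[OF M] by blast
  have meeting: "{S\<in>M. S \<inter> e \<noteq> {}} = {Pi, Pj}"
    using Pi Pj ij Match_disjoint[OF M] by blast
  have "Pi \<noteq> Pj"
  proof
    assume "Pi = Pj"
    then have "Pi = e"
      using Pi Pj ij Match_card[OF M Pi(1)] by (auto simp: card_2_iff)
    then show False
      using nonempty meeting \<open>Pi = Pj\<close> unfolding through_def by simp
  qed
  then have disjoint: "Pi \<inter> Pj = {}"
    using Match_disjoint[OF M Pi(1) Pj(1)] by blast
  have union: "Pi \<union> Pj = through e M \<union> e"
    using meeting Pi Pj ij unfolding through_def by auto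
  have "finite Pi" "finite Pj"
    using Match_card[OF M] Pi(1) Pj(1) card_ge_0_finite by force+
  then have "card (Pi \<union> Pj) = 4"
    using card_Un_disjoint[OF _ _ disjoint] Match_card[OF M] Pi(1) Pj(1) by simp
  moreover have "through e M = (Pi \<union> Pj) - e"
    using union unfolding through_def by blast
  moreover have "finite e"
    using e(1) card.infinite by fastforce
  moreover have "e \<subseteq> Pi \<union> Pj"
    using union by blast
  ultimately have "card (through e M) = 2"
    using e(1) by (simp add: card_Diff_subset)
  then show ?thesis
    using Pi(1) Pj(1) disjoint union by blast
qed

lemma splice_Match:
  assumes M: "M \<in> Match W" and e: "card e = 2" "e \<subseteq> W \<or> e \<inter> W = {}"
  shows "splice e M \<in> Match (W - e)"
proof -
  define Q where "Q = {S\<in>M. S \<inter> e \<noteq> {}}"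
  define R where "R = (if through e M = {} then {} else {through e M})"
  have "splice e M = (M - Q) \<union> R"
    unfolding splice_def Q_def R_def by blast
  moreover have "M - Q \<in> Match (W - \<Union>Q)"
    by (rule Match_Diff[OF M]) (simp add: Q_def)
  moreover have "R \<in> Match (through e M)"
  proof (cases "through e M = {}")
    case False
    then have "card (through e M) = 2"
      using through_pairs[OF M e] by blast
    with False show ?thesis
      unfolding R_def by (simp add: Match_singleton)
  qed (simp add: R_def Match_empty)
  moreover have "through e M = \<Union>Q - e" "\<Union>Q \<subseteq> W" "W \<inter> e \<subseteq> \<Union>Q"
    using Union_Match[OF M] unfolding through_def Q_def by blast+
  then have "(W - \<Union>Q) \<inter> through e M = {}" "(W - \<Union>Q) \<union> through e M = W - e"
    by blast+
  ultimately show ?thesis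
    using Match_Un by metis
qed

lemma splice_new_pair:
  assumes "M \<in> Match W" "card e = 2" "e \<subseteq> W \<or> e \<inter> W = {}"
    and "S \<in> splice e M" "S \<notin> M"
  shows "\<exists>P1 P2. P1 \<in> M \<and> P2 \<in> M \<and> P1 \<inter> P2 = {} \<and> P1 \<union> P2 = S \<union> e"
proof -
  have "S = through e M" "through e M \<noteq> {}"
    using assms(4,5) unfolding splice_def by (auto split: if_splits)
  then show ?thesis
    using through_pairs[OF assms(1-3)] by blast
qed

lemma winding_flip_Un:
  assumes B: "winding J F B" and x: "x \<subseteq> J" and y: "y \<subseteq> J" and M: "M \<in> Match (x \<oplus>\<^sub>s y)"
    and P: "P1 \<in> M" "P2 \<in> M" "P1 \<inter> P2 = {}"
  shows "B x y M = B (x \<oplus>\<^sub>s (P1 \<union> P2)) (y \<oplus>\<^sub>s (P1 \<union> P2)) M"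
proof -
  have "P1 \<subseteq> J"
    using Union_Match[OF M] P(1) x y by (auto simp: xorset_def)
  then have x1: "x \<oplus>\<^sub>s P1 \<subseteq> J" and y1: "y \<oplus>\<^sub>s P1 \<subseteq> J"
    using x y by (auto simp: xorset_def)
  have M1: "M \<in> Match ((x \<oplus>\<^sub>s P1) \<oplus>\<^sub>s (y \<oplus>\<^sub>s P1))"
    using M by (simp only: xorset_cancel)
  have xor_Un: "(z \<oplus>\<^sub>s P1) \<oplus>\<^sub>s P2 = z \<oplus>\<^sub>s (P1 \<union> P2)" for z
    using P(3) by (auto simp: xorset_def)
  have "B x y M = B (x \<oplus>\<^sub>s P1) (y \<oplus>\<^sub>s P1) M"
    by (rule winding_flip[OF B x y M P(1)])
  also have "\<dots> = B ((x \<oplus>\<^sub>s P1) \<oplus>\<^sub>s P2) ((y \<oplus>\<^sub>s P1) \<oplus>\<^sub>s P2) M"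
    by (rule winding_flip[OF B x1 y1 M1 P(2)])
  finally show ?thesis
    by (simp only: xor_Un)
qed

locale pair_contraction =
  fixes J :: "'j set" and F :: "'j set \<Rightarrow> rat" and B e
  assumes winding: "winding J F B" and finite_J: "finite J"
    and e_subset: "e \<subseteq> J" and card_e: "card e = 2"
begin

text \<open>In a term \<open>((c, d), M)\<close>, c and d are the values of x and y on the contracted pair.\<close>

definition terms :: "'j set \<Rightarrow> (('j set \<times> 'j set) \<times> 'j set set) set" where
  "terms Z = Sigma ({{}, e} \<times> {{}, e}) (\<lambda>(c, d). Match (Z \<union> (c \<oplus>\<^sub>s d)))"

definition contracted_B :: "'j set \<Rightarrow> 'j set \<Rightarrow> 'j set set \<Rightarrow> rat" where
  "contracted_B x y N =
     (\<Sum>((c, d), M) \<in> {t \<in> terms (x \<oplus>\<^sub>s y). splice e (snd t) = N}. B (x \<union> c) (y \<union> d) M)"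

lemma terms_Match:
  assumes "((c, d), M) \<in> terms (x \<oplus>\<^sub>s y)" "x \<subseteq> J - e" "y \<subseteq> J - e"
  shows "M \<in> Match ((x \<union> c) \<oplus>\<^sub>s (y \<union> d))" "x \<union> c \<subseteq> J" "y \<union> d \<subseteq> J"
proof -
  have cd: "c \<in> {{}, e}" "d \<in> {{}, e}" and M: "M \<in> Match ((x \<oplus>\<^sub>s y) \<union> (c \<oplus>\<^sub>s d))"
    using assms(1) unfolding terms_def by auto
  moreover have "(x \<union> y) \<inter> (c \<union> d) = {}"
    using cd assms(2,3) by auto
  ultimately show "M \<in> Match ((x \<union> c) \<oplus>\<^sub>s (y \<union> d))"
    by (simp add: xorset_Un_disjoint)
  show "x \<union> c \<subseteq> J" "y \<union> d \<subseteq> J"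
    using cd assms(2,3) e_subset by auto
qed

lemma splice_terms:
  assumes "Z \<inter> e = {}" "((c, d), M) \<in> terms Z"
  shows "splice e M \<in> Match Z"
proof -
  have M: "M \<in> Match (Z \<union> (c \<oplus>\<^sub>s d))" and "c \<oplus>\<^sub>s d = {} \<or> c \<oplus>\<^sub>s d = e"
    using assms(2) unfolding terms_def by (auto simp: xorset_def)
  then have "e \<subseteq> Z \<union> (c \<oplus>\<^sub>s d) \<or> e \<inter> (Z \<union> (c \<oplus>\<^sub>s d)) = {}" "Z \<union> (c \<oplus>\<^sub>s d) - e = Z"
    using assms(1) by auto
  then show ?thesis
    using splice_Match[OF M card_e] by simp
qed

lemma finite_terms: "finite Z \<Longrightarrow> finite (terms Z)"
  unfolding terms_def using finite_subset[OF e_subset finite_J]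
  by (intro finite_SigmaI) (auto intro!: finite_Match simp: xorset_def)

lemma contracted_nonneg:
  assumes "x \<subseteq> J - e" "y \<subseteq> J - e"
  shows "contracted_B x y N \<ge> 0"
  unfolding contracted_B_def
proof (rule sum_nonneg, clarify)
  fix c d M assume "((c, d), M) \<in> terms (x \<oplus>\<^sub>s y)"
  from terms_Match[OF this assms] show "B (x \<union> c) (y \<union> d) M \<ge> 0"
    using winding_nonneg[OF winding] by blast
qed

lemma contracted_product:
  assumes x: "x \<subseteq> J - e" and y: "y \<subseteq> J - e"
  shows "(F x + F (x \<union> e)) * (F y + F (y \<union> e)) = (\<Sum>N\<in>Match (x \<oplus>\<^sub>s y). contracted_B x y N)"
proof -
  define Z where "Z = x \<oplus>\<^sub>s y"
  have "Z \<subseteq> J" "Z \<inter> e = {}"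
    unfolding Z_def using x y by (auto simp: xorset_def)
  then have Z: "finite Z" "Z \<inter> e = {}"
    using finite_subset[OF _ finite_J] by auto
  have "e \<noteq> {}"
    using card_e by auto
  then have "(F x + F (x \<union> e)) * (F y + F (y \<union> e)) =
      (\<Sum>(c, d)\<in>{{}, e} \<times> {{}, e}. F (x \<union> c) * F (y \<union> d))"
    by (simp add: sum.cartesian_product[symmetric] algebra_simps)
  also have "\<dots> = (\<Sum>(c, d)\<in>{{}, e} \<times> {{}, e}. \<Sum>M\<in>Match (Z \<union> (c \<oplus>\<^sub>s d)). B (x \<union> c) (y \<union> d) M)"
  proof (intro sum.cong refl, clarify)
    fix c d assume cd: "c \<in> {{}, e}" "d \<in> {{}, e}"
    then have "x \<union> c \<subseteq> J" "y \<union> d \<subseteq> J" "(x \<union> y) \<inter> (c \<union> d) = {}"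
      using x y e_subset by auto
    then show "F (x \<union> c) * F (y \<union> d) = (\<Sum>M\<in>Match (Z \<union> (c \<oplus>\<^sub>s d)). B (x \<union> c) (y \<union> d) M)"
      using winding_product[OF winding] unfolding Z_def by (simp add: xorset_Un_disjoint)
  qed
  also have "\<dots> = (\<Sum>((c, d), M)\<in>terms Z. B (x \<union> c) (y \<union> d) M)"
  proof -
    have "finite (Match (Z \<union> (c \<oplus>\<^sub>s d)))" if "c \<in> {{}, e}" "d \<in> {{}, e}" for c d
      using that Z(1) finite_subset[OF e_subset finite_J] by (auto intro!: finite_Match simp: xorset_def)
    then show ?thesis
      unfolding terms_def
      using sum.Sigma[of "{{}, e} \<times> {{}, e}" "\<lambda>(c, d). Match (Z \<union> (c \<oplus>\<^sub>s d))"
          "\<lambda>(c, d) M. B (x \<union> c) (y \<union> d) M"]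
      by (simp add: split_def)
  qed
  also have "\<dots> = (\<Sum>N\<in>Match Z. contracted_B x y N)"
    unfolding contracted_B_def Z_def[symmetric]
    by (rule sum.group[symmetric]) (use finite_terms[OF Z(1)] finite_Match[OF Z(1)] splice_terms[OF Z(2)] in auto)
  finally show ?thesis
    unfolding Z_def .
qed

text \<open>Winding along a pair S of a spliced matching: if S \<notin> M, it is winding along the two
  pairs of M through e, which complements the values c and d on e.\<close>

definition rewind :: "'j set \<Rightarrow> ('j set \<times> 'j set) \<times> 'j set set \<Rightarrow> ('j set \<times> 'j set) \<times> 'j set set" where
  "rewind S = (\<lambda>((c, d), M). if S \<in> M then ((c, d), M) else ((e - c, e - d), M))"

lemma snd_rewind [simp]: "snd (rewind S t) = snd t"
  by (simp add: rewind_def split_def)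

lemma rewind_terms: "t \<in> terms Z \<Longrightarrow> rewind S t \<in> terms Z"
  by (auto simp: rewind_def terms_def xorset_def)

lemma rewind_rewind: "t \<in> terms Z \<Longrightarrow> rewind S (rewind S t) = t"
  by (auto simp: rewind_def terms_def)

lemma term_wind_kept:
  assumes x: "x \<subseteq> J - e" and y: "y \<subseteq> J - e" and t: "((c, d), M) \<in> terms (x \<oplus>\<^sub>s y)"
    and S: "S \<in> M" "S \<inter> e = {}"
  shows "B ((x \<oplus>\<^sub>s S) \<union> c) ((y \<oplus>\<^sub>s S) \<union> d) M = B (x \<union> c) (y \<union> d) M"
proof -
  have "c \<subseteq> e" "d \<subseteq> e"
    using t unfolding terms_def by auto
  then have "(x \<oplus>\<^sub>s S) \<union> c = (x \<union> c) \<oplus>\<^sub>s S" "(y \<oplus>\<^sub>s S) \<union> d = (y \<union> d) \<oplus>\<^sub>s S"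
    using S(2) by (auto simp: xorset_def)
  moreover have "B (x \<union> c) (y \<union> d) M = B ((x \<union> c) \<oplus>\<^sub>s S) ((y \<union> d) \<oplus>\<^sub>s S) M"
    by (rule winding_flip[OF winding terms_Match(2,3,1)[OF t x y] S(1)])
  ultimately show ?thesis
    by simp
qed

lemma term_wind_spliced:
  assumes x: "x \<subseteq> J - e" and y: "y \<subseteq> J - e" and t: "((c, d), M) \<in> terms (x \<oplus>\<^sub>s y)"
    and S: "S \<in> splice e M" "S \<notin> M" "S \<inter> e = {}"
  shows "B ((x \<oplus>\<^sub>s S) \<union> (e - c)) ((y \<oplus>\<^sub>s S) \<union> (e - d)) M = B (x \<union> c) (y \<union> d) M"
proof -
  have cd: "c \<in> {{}, e}" "d \<in> {{}, e}" and M: "M \<in> Match ((x \<oplus>\<^sub>s y) \<union> (c \<oplus>\<^sub>s d))"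
    using t unfolding terms_def by auto
  have "(x \<oplus>\<^sub>s y) \<inter> e = {}"
    using x y by (auto simp: xorset_def)
  then have "e \<subseteq> (x \<oplus>\<^sub>s y) \<union> (c \<oplus>\<^sub>s d) \<or> e \<inter> ((x \<oplus>\<^sub>s y) \<union> (c \<oplus>\<^sub>s d)) = {}"
    using cd by (auto simp: xorset_def)
  then obtain P1 P2 where P: "P1 \<in> M" "P2 \<in> M" "P1 \<inter> P2 = {}" "P1 \<union> P2 = S \<union> e"
    using splice_new_pair[OF M card_e _ S(1,2)] by blast
  have "(x \<union> c) \<oplus>\<^sub>s (S \<union> e) = (x \<oplus>\<^sub>s S) \<union> (e - c)" "(y \<union> d) \<oplus>\<^sub>s (S \<union> e) = (y \<oplus>\<^sub>s S) \<union> (e - d)"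
    using x y cd S(3) by (auto simp: xorset_def)
  moreover have "B (x \<union> c) (y \<union> d) M = B ((x \<union> c) \<oplus>\<^sub>s (P1 \<union> P2)) ((y \<union> d) \<oplus>\<^sub>s (P1 \<union> P2)) M"
    by (rule winding_flip_Un[OF winding terms_Match(2,3,1)[OF t x y] P(1-3)])
  ultimately show ?thesis
    using P(4) by simp
qed

lemma contracted_flip:
  assumes x: "x \<subseteq> J - e" and y: "y \<subseteq> J - e" and N: "N \<in> Match (x \<oplus>\<^sub>s y)" and S: "S \<in> N"
  shows "contracted_B x y N = contracted_B (x \<oplus>\<^sub>s S) (y \<oplus>\<^sub>s S) N"
proof -
  define K where "K = {t \<in> terms (x \<oplus>\<^sub>s y). splice e (snd t) = N}"
  have "S \<inter> e = {}"
    using Union_Match[OF N] S x y by (auto simp: xorset_def)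
  have wind: "(\<lambda>((c, d), M). B ((x \<oplus>\<^sub>s S) \<union> c) ((y \<oplus>\<^sub>s S) \<union> d) M) (rewind S t)
      = (\<lambda>((c, d), M). B (x \<union> c) (y \<union> d) M) t" if "t \<in> K" for t
  proof -
    obtain c d M where t: "t = ((c, d), M)" "((c, d), M) \<in> terms (x \<oplus>\<^sub>s y)" "S \<in> splice e M"
      using \<open>t \<in> K\<close> S unfolding K_def by (cases t) auto
    show ?thesis
      using term_wind_kept[OF x y t(2) _ \<open>S \<inter> e = {}\<close>] term_wind_spliced[OF x y t(2,3) _ \<open>S \<inter> e = {}\<close>]
      unfolding t(1) rewind_def by auto
  qed
  have "contracted_B x y N = (\<Sum>((c, d), M)\<in>K. B (x \<union> c) (y \<union> d) M)"
    unfolding contracted_B_def K_def ..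
  also have "\<dots> = (\<Sum>((c, d), M)\<in>K. B ((x \<oplus>\<^sub>s S) \<union> c) ((y \<oplus>\<^sub>s S) \<union> d) M)"
    by (rule sum.reindex_bij_witness[where i = "rewind S" and j = "rewind S"])
      (use wind rewind_rewind rewind_terms in \<open>auto simp: K_def\<close>)
  also have "\<dots> = contracted_B (x \<oplus>\<^sub>s S) (y \<oplus>\<^sub>s S) N"
    unfolding contracted_B_def K_def xorset_cancel ..
  finally show ?thesis .
qed

end

lemma even_windable_contract:
  assumes "even_windable J F" "finite J" "e \<subseteq> J" "card e = 2"
  shows "even_windable (J - e) (\<lambda>x. F x + F (x \<union> e))"
proof -
  obtain B where "winding J F B"
    using assms(1) even_windable_iff_winding by blast
  then interpret pair_contraction J F B e
    using assms(2-4) by unfold_locales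
  have "winding (J - e) (\<lambda>x. F x + F (x \<union> e)) contracted_B"
    by (rule windingI) (rule contracted_nonneg contracted_product contracted_flip; assumption)+
  then show ?thesis
    using even_windable_iff_winding by blast
qed

definition extensions :: "'j set \<Rightarrow> 'j set set \<Rightarrow> 'j set \<Rightarrow> 'j set set" where
  "extensions J P x = {x'. x' \<subseteq> J \<and> x' - \<Union>P = x \<and> (\<forall>p\<in>P. p \<subseteq> x' \<or> p \<inter> x' = {})}"

lemma extensions_insert:
  assumes "x \<inter> (\<Union>P \<union> e) = {}" "e \<inter> \<Union>P = {}" "e \<subseteq> J"
  shows "extensions J (insert e P) x = extensions J P x \<union> extensions J P (x \<union> e)"
  using assms unfolding extensions_def by auto

lemma extensions_disjoint:
  assumes "x \<inter> e = {}" "e \<inter> \<Union>P = {}" "e \<noteq> {}"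
  shows "extensions J P x \<inter> extensions J P (x \<union> e) = {}"
  using assms unfolding extensions_def by auto

lemma finite_extensions: "finite J \<Longrightarrow> finite (extensions J P x)"
  by (rule finite_subset[of _ "Pow J"]) (auto simp: extensions_def)

lemma even_windable_contract_all:
  assumes G: "even_windable J G" and J: "finite J" and P: "P \<in> Match Z" and Z: "Z \<subseteq> J"
  shows "even_windable (J - Z) (\<lambda>x. \<Sum>x'\<in>extensions J P x. G x')"
proof -
  have "finite P"
    using P Z J finite_subset by (metis Union_Match finite_UnionD)
  then show ?thesis
    using P Z
  proof (induction P arbitrary: Z rule: finite_induct)
    case empty
    then have "Z = {}" "\<And>x. x \<subseteq> J \<Longrightarrow> extensions J {} x = {x}"
      using Union_Match by (auto simp: extensions_def)
    then show ?case
      using G by (simp add: even_windable_cong)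
  next
    case (insert e P)
    have e: "e \<subseteq> Z" "card e = 2"
      using Union_Match[OF insert.prems(1)] Match_card[OF insert.prems(1)] by auto
    have "P \<in> Match (Z - e)"
      using Match_Diff[OF insert.prems(1), of "{e}"] insert.hyps(2) by simp
    then have IH: "even_windable (J - (Z - e)) (\<lambda>x. \<Sum>x'\<in>extensions J P x. G x')"
      using insert.IH insert.prems(2) by blast
    have "even_windable (J - (Z - e) - e)
        (\<lambda>x. (\<Sum>x'\<in>extensions J P x. G x') + (\<Sum>x'\<in>extensions J P (x \<union> e). G x'))"
      using even_windable_contract[OF IH] J e insert.prems(2) by auto
    moreover have "J - (Z - e) - e = J - Z"
      using e by blast
    moreover have sums: "(\<Sum>x'\<in>extensions J P x. G x') + (\<Sum>x'\<in>extensions J P (x \<union> e). G x')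
        = (\<Sum>x'\<in>extensions J (insert e P) x. G x')" if "x \<subseteq> J - Z" for x
    proof -
      have "\<Union>P = Z - e" "e \<noteq> {}"
        using Union_Match[OF \<open>P \<in> Match (Z - e)\<close>] e(2) by auto
      then have "x \<inter> (\<Union>P \<union> e) = {}" "e \<inter> \<Union>P = {}" "e \<subseteq> J" "x \<inter> e = {}" "e \<noteq> {}"
        using that e insert.prems(2) by auto
      then show ?thesis
        by (simp add: extensions_insert extensions_disjoint sum.union_disjoint finite_extensions J)
    qed
    ultimately show ?case
      using even_windable_cong[OF _ sums] by simp
  qed
qed

lemma extensions_eq_assignments:
  assumes E: "E \<in> Match (J - A)" and A: "A \<subseteq> J"
  shows "extensions J E x = {x' \<in> assignments J E. x' \<inter> A = x}"
proof -
  have consistent: "(\<forall>p\<in>E. p \<subseteq> x' \<or> p \<inter> x' = {}) \<longleftrightarrow> (\<forall>i j. {i, j} \<in> E \<longrightarrow> (i \<in> x' \<longleftrightarrow> j \<in> x'))"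
    for x'
  proof
    assume "\<forall>i j. {i, j} \<in> E \<longrightarrow> (i \<in> x' \<longleftrightarrow> j \<in> x')"
    moreover have "\<exists>i j. p = {i, j}" if "p \<in> E" for p
      using Match_card[OF E that] by (auto simp: card_2_iff)
    ultimately show "\<forall>p\<in>E. p \<subseteq> x' \<or> p \<inter> x' = {}"
      by blast
  next
    assume "\<forall>p\<in>E. p \<subseteq> x' \<or> p \<inter> x' = {}"
    then show "\<forall>i j. {i, j} \<in> E \<longrightarrow> (i \<in> x' \<longleftrightarrow> j \<in> x')"
      by fastforce
  qed
  have "x' - \<Union>E = x' \<inter> A" if "x' \<subseteq> J" for x'
    using that A Union_Match[OF E] by blast
  then show ?thesis
    unfolding extensions_def assignments_def consistent by auto
qed

theorem lemma7:
  fixes J :: "'j set" and V :: "'v set" and Jv :: "'v \<Rightarrow> 'j set"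
    and A :: "'j set" and E :: "'j set set" and F :: "'v \<Rightarrow> 'j set \<Rightarrow> rat"
  assumes "circuit J V Jv A E F"
    and "\<forall>v\<in>V. even_windable (Jv v) (F v)"
  shows "even_windable A (signature J V Jv A E F)"
proof -
  have J: "finite J" "finite V" "\<forall>v\<in>V. Jv v \<subseteq> J" "(\<Union>v\<in>V. Jv v) = J"
      "\<forall>v\<in>V. \<forall>w\<in>V. v \<noteq> w \<longrightarrow> Jv v \<inter> Jv w = {}" "A \<subseteq> J" "E \<in> Match (J - A)"
    using assms(1) unfolding circuit_def by auto
  then have "\<forall>v\<in>V. finite (Jv v)"
    using finite_subset by blast
  then have "even_windable J (wt V Jv F)"
    using even_windable_prod[OF J(2,5) _ assms(2)] J(4) unfolding wt_def by simp
  then have "even_windable (J - (J - A)) (\<lambda>x. \<Sum>x'\<in>extensions J E x. wt V Jv F x')"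
    using even_windable_contract_all J(1,7) by blast
  moreover have "J - (J - A) = A"
    using J(6) by blast
  ultimately show ?thesis
    using extensions_eq_assignments[OF J(7,6)] unfolding signature_def by simp
qed

end
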